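(* Let $f\in\mathcal F^{\,r}_{op}$ and $k\ge1$. The following are equivalent: (i) $I^{SLD}_\rho(A)\le k\,I^f_\rho(A)$ for every $n$, every faithful $\rho\in\mathcal D^1_n$ and every self-adjoint $A\in M_n(\mathbb C)$; (ii) $m_{\tilde f}(x,y)\le\big(1-\frac1k\big)\frac{x+y}{2}+\frac1k\cdot\frac{2xy}{x+y}$ for all $x,y>0$; (iii) $f(x)\le 2kf(0)\cdot\frac{1+x}{2}$ for all $x>0$.
   Context: $\mathcal F_{op}$ is the class of functions $f:(0,\infty)\to(0,\infty)$ that are operator monotone, satisfy $f(1)=1$ and $tf(t^{-1})=f(t)$ for all $t>0$. $f(0):=\lim_{x\to0^+}f(x)$, and $\mathcal F^{\,r}_{op}=\{f\in\mathcal F_{op}: f(0)\neq0\}$. For $f\in\mathcal F^{\,r}_{op}$ and $x>0$, $\tilde f(x):=\frac12\big[(x+1)-(x-1)^2\frac{f(0)}{f(x)}\big]$ (this $\tilde f$ again belongs to $\mathcal F_{op}$). For any $g\in\mathcal F_{op}$ and $x,y>0$, $m_g(x,y)=xg(y/x)$. $\mathcal D_n^1$ is the set of strictly positive $n\times n$ density matrices. $L_\rho(X)=\rho X$, $R_\rho(X)=X\rho$, and $m_f(L_\rho,R_\rho)$ multiplies the entry $X_{ij}$ of $X$ (in an orthonormal eigenbasis of $\rho$ with eigenvalues $\lambda_i$) by $m_f(\lambda_i,\lambda_j)$. $\|X\|^2_{\rho,f}=\mathrm{Tr}\big(X^* m_f(L_\rho,R_\rho)^{-1}(X)\big)$. The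 $f$-information is $I^f_\rho(A)=\frac{f(0)}{2}\|i[\rho,A]\|^2_{\rho,f}$, and $I^{SLD}_\rho:=I^{f_{SLD}}_\rho$ with $f_{SLD}(x)=\frac{1+x}{2}$ (equivalently $\frac14\mathrm{Tr}(\rho L^2)$, $L=2(L_\rho+R_\rho)^{-1}(i[\rho,A])$). *)

theory Defs
  imports "HOL-Analysis.Analysis" "Jordan_Normal_Form.Matrix"
begin

definition cadj :: "complex mat \<Rightarrow> complex mat" where
  "cadj A = mat (dim_col A) (dim_row A) (\<lambda>(i,j). cnj (A $$ (j,i)))"

definition mtrace :: "complex mat \<Rightarrow> complex" where
  "mtrace A = (\<Sum>i<dim_row A. A $$ (i,i))"

definition hermitian_mat :: "complex mat \<Rightarrow> bool" where
  "hermitian_mat A \<longleftrightarrow> dim_row A = dim_col A \<and> cadj A = A"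

definition unitary_mat :: "nat \<Rightarrow> complex mat \<Rightarrow> bool" where
  "unitary_mat n U \<longleftrightarrow> U \<in> carrier_mat n n \<and> cadj U * U = 1\<^sub>m n"

definition qform :: "complex mat \<Rightarrow> complex vec \<Rightarrow> complex" where
  "qform A v = (\<Sum>i<dim_row A. cnj (v $ i) * (A *\<^sub>v v) $ i)"

definition psd_mat :: "complex mat \<Rightarrow> bool" where
  "psd_mat A \<longleftrightarrow> hermitian_mat A \<and>
     (\<forall>v \<in> carrier_vec (dim_row A). 0 \<le> Re (qform A v))"

definition pd_mat :: "complex mat \<Rightarrow> bool" where
  "pd_mat A \<longleftrightarrow> hermitian_mat A \<and>
     (\<forall>v \<in> carrier_vec (dim_row A). v \<noteq> 0\<^sub>v (dim_row A) \<longrightarrow> 0 < Re (qform A v))"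

definition eig_decomp :: "complex mat \<Rightarrow> complex mat \<times> (nat \<Rightarrow> real)" where
  "eig_decomp A = (SOME (U, d). unitary_mat (dim_row A) U \<and>
      A = U * mat_diag (dim_row A) (\<lambda>i. complex_of_real (d i)) * cadj U)"

definition mat_fun :: "(real \<Rightarrow> real) \<Rightarrow> complex mat \<Rightarrow> complex mat" where
  "mat_fun f A = (case eig_decomp A of (U, d) \<Rightarrow>
      U * mat_diag (dim_row A) (\<lambda>i. complex_of_real (f (d i))) * cadj U)"

definition operator_monotone :: "(real \<Rightarrow> real) \<Rightarrow> bool" where
  "operator_monotone f \<longleftrightarrow>
     (\<forall>n A B. A \<in> carrier_mat n n \<longrightarrow> B \<in> carrier_mat n n \<longrightarrow> pd_mat A \<longrightarrow> pd_mat B \<longrightarrow>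
        psd_mat (B - A) \<longrightarrow> psd_mat (mat_fun f B - mat_fun f A))"

definition Fop :: "(real \<Rightarrow> real) \<Rightarrow> bool" where
  "Fop f \<longleftrightarrow> (\<forall>x>0. f x > 0) \<and> operator_monotone f \<and> f 1 = 1 \<and>
              (\<forall>t>0. t * f (1 / t) = f t)"

definition fzero :: "(real \<Rightarrow> real) \<Rightarrow> real" where
  "fzero f = Lim (at_right 0) f"

definition Fop_r :: "(real \<Rightarrow> real) \<Rightarrow> bool" where
  "Fop_r f \<longleftrightarrow> Fop f \<and> fzero f \<noteq> 0"

definition ftilde :: "(real \<Rightarrow> real) \<Rightarrow> real \<Rightarrow> real" where
  "ftilde f x = ((x + 1) - (x - 1)^2 * fzero f / f x) / 2"

definition mean_f :: "(real \<Rightarrow> real) \<Rightarrow> real \<Rightarrow> real \<Rightarrow> real" where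
  "mean_f g x y = x * g (y / x)"

definition f_SLD :: "real \<Rightarrow> real" where
  "f_SLD x = (1 + x) / 2"

definition faithful_density :: "nat \<Rightarrow> complex mat \<Rightarrow> bool" where
  "faithful_density n \<rho> \<longleftrightarrow> \<rho> \<in> carrier_mat n n \<and> pd_mat \<rho> \<and> mtrace \<rho> = 1"

text \<open>m_g(L_rho,R_rho)^{-1}(X): in an eigenbasis of rho, divide entry X_ij by m_g(lambda_i,lambda_j).\<close>
definition mean_superop_inv :: "(real \<Rightarrow> real) \<Rightarrow> complex mat \<Rightarrow> complex mat \<Rightarrow> complex mat" where
  "mean_superop_inv g \<rho> X = (case eig_decomp \<rho> of (U, d) \<Rightarrow>
      (let n = dim_row \<rho>; Y = cadj U * X * U in
        U * mat n n (\<lambda>(i,j). Y $$ (i,j) / complex_of_real (mean_f g (d i) (d j))) * cadj U))"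

definition norm_sq :: "(real \<Rightarrow> real) \<Rightarrow> complex mat \<Rightarrow> complex mat \<Rightarrow> real" where
  "norm_sq g \<rho> X = Re (mtrace (cadj X * mean_superop_inv g \<rho> X))"

definition f_info :: "(real \<Rightarrow> real) \<Rightarrow> complex mat \<Rightarrow> complex mat \<Rightarrow> real" where
  "f_info g \<rho> A = fzero g / 2 * norm_sq g \<rho> (\<i> \<cdot>\<^sub>m (\<rho> * A - A * \<rho>))"

definition SLD_info :: "complex mat \<Rightarrow> complex mat \<Rightarrow> real" where
  "SLD_info \<rho> A = f_info f_SLD \<rho> A"

end

theory Submission
  imports Defs "Jordan_Normal_Form.Schur_Decomposition" "Jordan_Normal_Form.Spectral_Radius"
begin

(*
  Write rho = U diag(lambda) U^* and B = U^* A U. Every f-information is then the sum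
    fzero f / 2 * SUM i j. (lambda_i - lambda_j)^2 |B_ij|^2 / m_f(lambda_i, lambda_j),
  and since f_SLD(0) = 1/2 and m_f(x, y) = x f(y/x), comparing the two sums term by term shows
  that (i) follows from the scalar bound  f t <= k fzero(f) (1 + t)  for t > 0, t ~= 1.  The bound is
  also necessary: for rho = diag(x, y) and A = sigma_x only the two off-diagonal terms survive.
  Clearing denominators in the definition of ftilde turns (ii) into the same bound, and (iii) is
  the bound together with its case t = 1, which follows by letting t decrease to 1, because an
  operator monotone function is monotone (test it on 1x1 matrices).
*)

section \<open>Conjugate transpose and unitary matrices\<close>

lemma dim_cadj [simp]: "dim_row (cadj A) = dim_col A" "dim_col (cadj A) = dim_row A"
  by (auto simp: cadj_def)

lemma cadj_carrier_mat: "A \<in> carrier_mat n m \<Longrightarrow> cadj A \<in> carrier_mat m n"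
  by (auto simp: cadj_def)

lemma index_cadj [simp]: "i < dim_col A \<Longrightarrow> j < dim_row A \<Longrightarrow> cadj A $$ (i,j) = cnj (A $$ (j,i))"
  by (auto simp: cadj_def)

lemma cadj_cadj [simp]: "cadj (cadj A) = A"
  by (rule eq_matI) auto

lemma cadj_mult:
  assumes "A \<in> carrier_mat n m" "B \<in> carrier_mat m p"
  shows "cadj (A * B) = cadj B * cadj A"
  using assms by (intro eq_matI) (auto simp: scalar_prod_def ac_simps)

lemma cadj_congruence:
  assumes A: "A \<in> carrier_mat n n" and W: "W \<in> carrier_mat n m"
  shows "cadj (cadj W * A * W) = cadj W * cadj A * W"
proof -
  have W': "cadj W \<in> carrier_mat m n"
    using cadj_carrier_mat[OF W] .
  have "cadj (cadj W * A * W) = cadj W * cadj (cadj W * A)"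
    by (rule cadj_mult[of "cadj W * A" m n W m]) (use A W W' in auto)
  also have "cadj (cadj W * A) = cadj A * W"
    using cadj_mult[of "cadj W" m n A n] A W' by simp
  finally show ?thesis
    using A W W' cadj_carrier_mat[OF A] by (simp add: assoc_mult_mat[of _ m n _ n _ m])
qed

lemma index_cadj_mult:
  assumes "U \<in> carrier_mat n m" "V \<in> carrier_mat n p" "i < m" "j < p"
  shows "(cadj U * V) $$ (i,j) = (\<Sum>k<n. cnj (U $$ (k,i)) * V $$ (k,j))"
  using assms by (auto simp: scalar_prod_def atLeast0LessThan)

lemma index_mult_diag_cadj:
  assumes "U \<in> carrier_mat n n" "i < n" "j < n"
  shows "(U * mat_diag n d * cadj U) $$ (i,j) = (\<Sum>k<n. U $$ (i,k) * d k * cnj (U $$ (j,k)))"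
  using assms by (auto simp: mat_diag_mult_right scalar_prod_def atLeast0LessThan)

lemma mtrace_mult_comm:
  assumes "A \<in> carrier_mat n m" "B \<in> carrier_mat m n"
  shows "mtrace (A * B) = mtrace (B * A)"
proof -
  have "mtrace (A * B) = (\<Sum>i<n. \<Sum>k<m. A $$ (i,k) * B $$ (k,i))"
    using assms by (auto simp: mtrace_def scalar_prod_def atLeast0LessThan)
  also have "\<dots> = (\<Sum>k<m. \<Sum>i<n. B $$ (k,i) * A $$ (i,k))"
    by (subst sum.swap) (simp add: ac_simps)
  also have "\<dots> = mtrace (B * A)"
    using assms by (auto simp: mtrace_def scalar_prod_def atLeast0LessThan)
  finally show ?thesis .
qed

lemma unitary_matD:
  assumes "unitary_mat n U"
  shows "U \<in> carrier_mat n n" and "cadj U \<in> carrier_mat n n"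
    and "cadj U * U = 1\<^sub>m n" and "U * cadj U = 1\<^sub>m n"
  using assms mat_mult_left_right_inverse[of "cadj U" n U]
  by (auto simp: unitary_mat_def cadj_carrier_mat)

lemma unitary_mat_cancel:
  assumes "unitary_mat n U" "X \<in> carrier_mat n m"
  shows "cadj U * (U * X) = X" and "U * (cadj U * X) = X"
  using assms unitary_matD[OF assms(1)]
  by (simp_all flip: assoc_mult_mat[of _ n n _ n _ m])

lemma unitary_mat_mult:
  assumes "unitary_mat n U" "unitary_mat n V"
  shows "unitary_mat n (U * V)"
  using unitary_matD[OF assms(1)] unitary_matD[OF assms(2)] unitary_mat_cancel[OF assms(1)]
  by (simp add: unitary_mat_def cadj_mult[of _ n n _ n] assoc_mult_mat[of _ n n _ n _ n])

lemma unitary_conj_diag: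
  assumes U: "unitary_mat n U" and D: "D \<in> carrier_mat n n" and A: "A = U * D * cadj U"
  shows "cadj U * A = D * cadj U" and "A * U = U * D"
  using unitary_matD[OF U] unitary_mat_cancel[OF U, of "D * cadj U" n] D unfolding A
  by (simp_all add: assoc_mult_mat[of _ n n _ n _ n])

lemma mtrace_unitary_conj:
  assumes U: "unitary_mat n U" and D: "D \<in> carrier_mat n n"
  shows "mtrace (U * D * cadj U) = mtrace D"
proof -
  note Um = unitary_matD[OF U]
  have "mtrace (U * D * cadj U) = mtrace (cadj U * (U * D))"
    by (rule mtrace_mult_comm) (use Um D in auto)
  then show ?thesis
    using unitary_mat_cancel[OF U D] by simp
qed

lemma unitary_col_norm:
  assumes "unitary_mat n U" "i < n"
  shows "(\<Sum>k<n. cnj (U $$ (k,i)) * U $$ (k,i)) = 1"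
proof -
  note Um = unitary_matD[OF assms(1)]
  have "(\<Sum>k<n. cnj (U $$ (k,i)) * U $$ (k,i)) = (cadj U * U) $$ (i,i)"
    using index_cadj_mult[OF Um(1) Um(1) assms(2) assms(2)] by simp
  then show ?thesis
    using Um(3) assms(2) by simp
qed

section \<open>The spectral theorem for hermitian matrices\<close>

lemma cscalar_prod_self:
  assumes "w \<in> carrier_vec n"
  shows "w \<bullet>c w = complex_of_real (\<Sum>k<n. (cmod (w $ k))\<^sup>2)"
proof -
  have "w $ k * cnj (w $ k) = complex_of_real ((cmod (w $ k))\<^sup>2)" for k
    by (rule complex_norm_square[symmetric])
  then show ?thesis
    using assms by (simp add: scalar_prod_def atLeast0LessThan)
qed

lemma corthogonal_inner:
  fixes ws :: "complex vec list"
  assumes ws: "set ws \<subseteq> carrier_vec n" "corthogonal ws" "length ws = n" and i: "i < n" and j: "j < n"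
  shows "(\<Sum>k<n. cnj (ws ! i $ k) * ws ! j $ k)
    = (if i = j then complex_of_real (\<Sum>k<n. (cmod (ws ! i $ k))\<^sup>2) else 0)"
proof -
  have wsi: "ws ! i \<in> carrier_vec n" and wsj: "ws ! j \<in> carrier_vec n"
    using ws i j by auto
  then have "(\<Sum>k<n. cnj (ws ! i $ k) * ws ! j $ k) = ws ! j \<bullet>c ws ! i"
    by (simp add: scalar_prod_def atLeast0LessThan ac_simps)
  then show ?thesis
    using cscalar_prod_self[OF wsi] ws i j unfolding corthogonal_def by auto
qed

lemma corthogonal_norm_pos:
  fixes ws :: "complex vec list"
  assumes ws: "set ws \<subseteq> carrier_vec n" "corthogonal ws" "length ws = n" and i: "i < n"
  shows "0 < (\<Sum>k<n. (cmod (ws ! i $ k))\<^sup>2)"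
proof -
  have "ws ! i \<bullet>c ws ! i \<noteq> 0"
    using ws i unfolding corthogonal_def by auto
  moreover have "complex_of_real (\<Sum>k<n. (cmod (ws ! i $ k))\<^sup>2) = ws ! i \<bullet>c ws ! i"
    using ws i by (intro cscalar_prod_self[symmetric]) auto
  ultimately have "(\<Sum>k<n. (cmod (ws ! i $ k))\<^sup>2) \<noteq> 0"
    by (metis of_real_0)
  moreover have "0 \<le> (\<Sum>k<n. (cmod (ws ! i $ k))\<^sup>2)"
    by (simp add: sum_nonneg)
  ultimately show ?thesis
    by simp
qed

lemma unitary_mat_of_corthogonal:
  assumes ws: "set ws \<subseteq> carrier_vec n" "corthogonal ws" "length ws = n"
  obtains W c where "unitary_mat n W"
    and "\<And>i. i < n \<Longrightarrow> col W i = complex_of_real (c i) \<cdot>\<^sub>v ws ! i"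
proof -
  define s where "s i = (\<Sum>k<n. (cmod (ws ! i $ k))\<^sup>2)" for i
  have inner: "(\<Sum>k<n. cnj (ws ! i $ k) * ws ! j $ k) = (if i = j then complex_of_real (s i) else 0)"
    if "i < n" "j < n" for i j
    unfolding s_def by (rule corthogonal_inner[OF ws that])
  have s_pos: "0 < s i" if "i < n" for i
    unfolding s_def by (rule corthogonal_norm_pos[OF ws that])
  define c where "c i = 1 / sqrt (s i)" for i
  define W where "W = mat n n (\<lambda>(k,i). complex_of_real (c i) * ws ! i $ k)"
  have "cadj W * W = 1\<^sub>m n"
  proof (rule eq_matI)
    fix i j assume "i < dim_row (1\<^sub>m n :: complex mat)" "j < dim_col (1\<^sub>m n :: complex mat)"
    then have i: "i < n" and j: "j < n" by auto
    have "(cadj W * W) $$ (i,j) = complex_of_real (c i * c j) * (\<Sum>k<n. cnj (ws ! i $ k) * ws ! j $ k)"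
      using i j by (simp add: W_def scalar_prod_def atLeast0LessThan sum_distrib_left ac_simps)
    also have "\<dots> = 1\<^sub>m n $$ (i,j)"
      using i j s_pos[OF i] s_pos[OF j] by (simp add: inner c_def flip: of_real_mult)
    finally show "(cadj W * W) $$ (i,j) = 1\<^sub>m n $$ (i,j)" .
  qed (auto simp: W_def)
  then have "unitary_mat n W"
    by (simp add: unitary_mat_def W_def)
  moreover have "col W i = complex_of_real (c i) \<cdot>\<^sub>v ws ! i" if "i < n" for i
  proof -
    have "ws ! i \<in> carrier_vec n"
      using ws that by auto
    then show ?thesis
      using that by (intro eq_vecI) (auto simp: W_def)
  qed
  ultimately show ?thesis
    using that by blast
qed

lemma unitary_mat_eigenvector:
  assumes A: "A \<in> carrier_mat n n" and ev: "eigenvector A v e"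
  obtains W where "unitary_mat n W" and "A *\<^sub>v col W 0 = e \<cdot>\<^sub>v col W 0"
proof -
  interpret cof_vec_space n "TYPE(complex)" .
  from ev A have v: "v \<in> carrier_vec n" and v0: "v \<noteq> 0\<^sub>v n" and Av: "A *\<^sub>v v = e \<cdot>\<^sub>v v"
    unfolding eigenvector_def by auto
  have n: "0 < n"
  proof (rule ccontr)
    assume "\<not> 0 < n"
    then have "v = 0\<^sub>v n"
      using v by (intro eq_vecI) auto
    with v0 show False ..
  qed
  note b = basis_completion[OF v v0]
  obtain vs where b_eq: "basis_completion v = v # vs"
    by (simp add: basis_completion_def Let_def)
  define ws where "ws = gram_schmidt n (basis_completion v)"
  have ws: "set ws \<subseteq> carrier_vec n" "corthogonal ws" "length ws = n"
    using gram_schmidt_result[OF b(2,4,5) ws_def] b(6) by auto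
  have "ws \<noteq> []"
    using ws(3) n by auto
  then have "ws ! 0 = v"
    using v by (simp add: hd_conv_nth[symmetric] ws_def b_eq)
  obtain W c where W: "unitary_mat n W" and "\<And>i. i < n \<Longrightarrow> col W i = complex_of_real (c i) \<cdot>\<^sub>v ws ! i"
    using unitary_mat_of_corthogonal[OF ws] by blast
  then have "col W 0 = complex_of_real (c 0) \<cdot>\<^sub>v v"
    using \<open>ws ! 0 = v\<close> n by simp
  then have "A *\<^sub>v col W 0 = e \<cdot>\<^sub>v col W 0"
    using A v Av by (simp add: mult_mat_vec smult_smult_assoc mult.commute)
  with W show ?thesis
    using that by blast
qed

lemma unitary_conj_eigenvector_col:
  assumes W: "unitary_mat n W" and A: "A \<in> carrier_mat n n" and n: "0 < n"
    and AW: "A *\<^sub>v col W 0 = e \<cdot>\<^sub>v col W 0" and i: "i < n"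
  shows "(cadj W * A * W) $$ (i,0) = (if i = 0 then e else 0)"
proof -
  note Wm = unitary_matD[OF W]
  have "col (cadj W * A * W) 0 = cadj W *\<^sub>v (A *\<^sub>v col W 0)"
    using A Wm n col_mult2[of "cadj W" n n "A * W" n 0] col_mult2[of A n n W n 0]
    by (simp add: assoc_mult_mat[of _ n n _ n _ n])
  also have "\<dots> = e \<cdot>\<^sub>v (cadj W *\<^sub>v col W 0)"
    using A Wm n by (simp add: AW mult_mat_vec)
  also have "cadj W *\<^sub>v col W 0 = unit_vec n 0"
    using Wm n col_mult2[of "cadj W" n n W n 0] by simp
  finally have "col (cadj W * A * W) 0 = e \<cdot>\<^sub>v unit_vec n 0" .
  moreover have "(cadj W * A * W) $$ (i,0) = col (cadj W * A * W) 0 $ i"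
    using A Wm n i by simp
  ultimately show ?thesis
    using i by simp
qed

lemma hermitian_deflation:
  assumes A: "A \<in> carrier_mat n n" "cadj A = A" and n: "0 < n"
  obtains W e where "unitary_mat n W"
    and "\<And>i. i < n \<Longrightarrow> (cadj W * A * W) $$ (i,0) = (if i = 0 then complex_of_real e else 0)"
    and "\<And>j. j < n \<Longrightarrow> (cadj W * A * W) $$ (0,j) = (if j = 0 then complex_of_real e else 0)"
proof -
  obtain e v where "eigenvector A v e"
    using spectrum_non_empty[OF A(1) n] by (auto simp: spectrum_def eigenvalue_def)
  then obtain W where W: "unitary_mat n W" and AW: "A *\<^sub>v col W 0 = e \<cdot>\<^sub>v col W 0"
    using unitary_mat_eigenvector[OF A(1)] by blast
  note Wm = unitary_matD[OF W]
  define A' where "A' = cadj W * A * W"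
  have col0: "A' $$ (i,0) = (if i = 0 then e else 0)" if "i < n" for i
    unfolding A'_def by (rule unitary_conj_eigenvector_col[OF W A(1) n AW that])
  have A': "A' \<in> carrier_mat n n"
    using A Wm by (simp add: A'_def)
  have herm: "cadj A' = A'"
    using cadj_congruence[OF A(1) Wm(1)] A(2) by (simp add: A'_def)
  have row0: "A' $$ (0,j) = cnj (A' $$ (j,0))" if "j < n" for j
  proof -
    have "A' $$ (0,j) = cadj A' $$ (0,j)"
      using herm by simp
    also have "\<dots> = cnj (A' $$ (j,0))"
      using that A' n by simp
    finally show ?thesis .
  qed
  have "cnj e = e"
    using row0[OF n] col0[OF n] by simp
  then have e: "complex_of_real (Re e) = e"
    by (simp add: complex_eq_iff)
  have "A' $$ (i,0) = (if i = 0 then complex_of_real (Re e) else 0)" if "i < n" for i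
    unfolding e by (rule col0[OF that])
  moreover have "A' $$ (0,j) = (if j = 0 then complex_of_real (Re e) else 0)" if "j < n" for j
    unfolding e using row0[OF that] col0[OF that] \<open>cnj e = e\<close> by simp
  ultimately show ?thesis
    using that[OF W] unfolding A'_def by blast
qed

definition block_diag_one :: "complex mat \<Rightarrow> complex mat" where
  "block_diag_one U = mat (Suc (dim_row U)) (Suc (dim_row U))
     (\<lambda>(i,j). if i = 0 \<or> j = 0 then (if i = j then 1 else 0) else U $$ (i - 1, j - 1))"

lemma unitary_mat_block_diag_one:
  assumes U: "unitary_mat m U"
  shows "unitary_mat (Suc m) (block_diag_one U)"
proof -
  define V where "V = block_diag_one U"
  note Um = unitary_matD[OF U]
  have V: "V \<in> carrier_mat (Suc m) (Suc m)"
    using Um by (simp add: V_def block_diag_one_def)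
  have "cadj V * V = 1\<^sub>m (Suc m)"
  proof (rule eq_matI)
    fix i j assume "i < dim_row (1\<^sub>m (Suc m) :: complex mat)" "j < dim_col (1\<^sub>m (Suc m) :: complex mat)"
    then have i: "i < Suc m" and j: "j < Suc m" by auto
    have "(cadj V * V) $$ (i,j)
        = cnj (V $$ (0,i)) * V $$ (0,j) + (\<Sum>k<m. cnj (V $$ (Suc k,i)) * V $$ (Suc k,j))"
      unfolding index_cadj_mult[OF V V i j] by (rule sum.lessThan_Suc_shift)
    also have "\<dots> = 1\<^sub>m (Suc m) $$ (i,j)"
    proof (cases "i = 0 \<or> j = 0")
      case True
      then show ?thesis
        using i j Um by (auto simp: V_def block_diag_one_def)
    next
      case False
      then obtain i' j' where ij: "i = Suc i'" "j = Suc j'"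
        by (metis not0_implies_Suc)
      then have "(\<Sum>k<m. cnj (V $$ (Suc k,i)) * V $$ (Suc k,j)) = (cadj U * U) $$ (i',j')"
        using i j Um index_cadj_mult[OF Um(1) Um(1), of i' j'] by (simp add: V_def block_diag_one_def)
      then show ?thesis
        using i j ij Um by (simp add: V_def block_diag_one_def)
    qed
    finally show "(cadj V * V) $$ (i,j) = 1\<^sub>m (Suc m) $$ (i,j)" .
  qed (use V in auto)
  then show ?thesis
    using V by (simp add: unitary_mat_def V_def)
qed

lemma block_diag_one_spectral:
  assumes A: "A \<in> carrier_mat (Suc m) (Suc m)"
    and col0: "\<And>i. i < Suc m \<Longrightarrow> A $$ (i,0) = (if i = 0 then complex_of_real e else 0)"
    and row0: "\<And>j. j < Suc m \<Longrightarrow> A $$ (0,j) = (if j = 0 then complex_of_real e else 0)"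
    and U: "unitary_mat m U"
    and block: "\<And>i j. i < m \<Longrightarrow> j < m \<Longrightarrow>
      A $$ (Suc i, Suc j) = (U * mat_diag m (\<lambda>i. complex_of_real (d i)) * cadj U) $$ (i,j)"
  shows "A = block_diag_one U * mat_diag (Suc m) (\<lambda>i. complex_of_real (case i of 0 \<Rightarrow> e | Suc i \<Rightarrow> d i))
      * cadj (block_diag_one U)"
proof -
  define V where "V = block_diag_one U"
  define d' where "d' = (\<lambda>i. complex_of_real (case i of 0 \<Rightarrow> e | Suc i \<Rightarrow> d i))"
  note Um = unitary_matD[OF U]
  have V: "V \<in> carrier_mat (Suc m) (Suc m)"
    using Um by (simp add: V_def block_diag_one_def)
  have entry: "A $$ (i,j) = (V * mat_diag (Suc m) d' * cadj V) $$ (i,j)"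
    if i: "i < Suc m" and j: "j < Suc m" for i j
  proof -
    have "(V * mat_diag (Suc m) d' * cadj V) $$ (i,j)
        = V $$ (i,0) * d' 0 * cnj (V $$ (j,0)) + (\<Sum>k<m. V $$ (i,Suc k) * d' (Suc k) * cnj (V $$ (j,Suc k)))"
      unfolding index_mult_diag_cadj[OF V i j] by (rule sum.lessThan_Suc_shift)
    also have "\<dots> = A $$ (i,j)"
    proof (cases "i = 0 \<or> j = 0")
      case True
      then show ?thesis
        using i j Um col0 row0 by (auto simp: V_def block_diag_one_def d'_def)
    next
      case False
      then obtain i' j' where ij: "i = Suc i'" "j = Suc j'"
        by (metis not0_implies_Suc)
      then show ?thesis
        using i j Um block[of i' j'] index_mult_diag_cadj[OF Um(1), of i' j']
        by (simp add: V_def block_diag_one_def d'_def)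
    qed
    finally show ?thesis
      by simp
  qed
  have "A = V * mat_diag (Suc m) d' * cadj V"
    by (rule eq_matI) (use A V entry in auto)
  then show ?thesis
    by (simp add: V_def d'_def)
qed

lemma cadj_lower_block:
  assumes "A \<in> carrier_mat (Suc m) (Suc m)" "cadj A = A"
  shows "cadj (mat m m (\<lambda>(i,j). A $$ (Suc i, Suc j))) = mat m m (\<lambda>(i,j). A $$ (Suc i, Suc j))"
proof (rule eq_matI)
  fix i j assume "i < dim_row (mat m m (\<lambda>(i,j). A $$ (Suc i, Suc j)))"
    "j < dim_col (mat m m (\<lambda>(i,j). A $$ (Suc i, Suc j)))"
  then show "cadj (mat m m (\<lambda>(i,j). A $$ (Suc i, Suc j))) $$ (i,j) = mat m m (\<lambda>(i,j). A $$ (Suc i, Suc j)) $$ (i,j)"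
    using assms(1) arg_cong[OF assms(2), of "\<lambda>M. M $$ (Suc i, Suc j)"] by simp
qed simp_all

lemma unitary_conj_spectral:
  assumes W: "unitary_mat n W" and V: "unitary_mat n V" and A: "A \<in> carrier_mat n n"
    and D: "D \<in> carrier_mat n n" and conj: "cadj W * A * W = V * D * cadj V"
  shows "A = (W * V) * D * cadj (W * V)"
proof -
  note Wm = unitary_matD[OF W] and Vm = unitary_matD[OF V]
  have "A = W * (cadj W * A * W) * cadj W"
    using A Wm unitary_mat_cancel[OF W A] by (simp add: assoc_mult_mat[of _ n n _ n _ n])
  then show ?thesis
    using Wm Vm D by (simp add: conj cadj_mult[of _ n n _ n] assoc_mult_mat[of _ n n _ n _ n])
qed

theorem hermitian_spectral:
  assumes "A \<in> carrier_mat n n" "hermitian_mat A"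
  shows "\<exists>U d. unitary_mat n U \<and> A = U * mat_diag n (\<lambda>i. complex_of_real (d i)) * cadj U"
  using assms
proof (induction n arbitrary: A)
  case 0
  then show ?case
    by (intro exI[of _ "1\<^sub>m 0"] exI[of _ "\<lambda>_. 0"]) (auto simp: unitary_mat_def intro!: eq_matI)
next
  case (Suc m)
  have A: "A \<in> carrier_mat (Suc m) (Suc m)" and herm: "cadj A = A"
    using Suc.prems by (auto simp: hermitian_mat_def)
  obtain W e where W: "unitary_mat (Suc m) W"
    and col0: "\<And>i. i < Suc m \<Longrightarrow> (cadj W * A * W) $$ (i,0) = (if i = 0 then complex_of_real e else 0)"
    and row0: "\<And>j. j < Suc m \<Longrightarrow> (cadj W * A * W) $$ (0,j) = (if j = 0 then complex_of_real e else 0)"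
    using hermitian_deflation[OF A herm] by blast
  note Wm = unitary_matD[OF W]
  define A' where "A' = cadj W * A * W"
  have A': "A' \<in> carrier_mat (Suc m) (Suc m)" and herm': "cadj A' = A'"
    using A Wm herm cadj_congruence[OF A Wm(1)] by (simp_all add: A'_def)
  define B where "B = mat m m (\<lambda>(i,j). A' $$ (Suc i, Suc j))"
  obtain U d where U: "unitary_mat m U" and B: "B = U * mat_diag m (\<lambda>i. complex_of_real (d i)) * cadj U"
    using Suc.IH[of B] cadj_lower_block[OF A' herm'] by (auto simp: B_def hermitian_mat_def)
  have "A' $$ (Suc i, Suc j) = (U * mat_diag m (\<lambda>i. complex_of_real (d i)) * cadj U) $$ (i,j)"
    if "i < m" "j < m" for i j
    using that arg_cong[OF B, of "\<lambda>M. M $$ (i,j)"] by (simp add: B_def)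
  from block_diag_one_spectral[OF A' col0[folded A'_def] row0[folded A'_def] U this]
  have "A = (W * block_diag_one U)
      * mat_diag (Suc m) (\<lambda>i. complex_of_real (case i of 0 \<Rightarrow> e | Suc i \<Rightarrow> d i)) * cadj (W * block_diag_one U)"
    by (intro unitary_conj_spectral[OF W unitary_mat_block_diag_one[OF U] A]) (simp_all add: A'_def)
  then show ?case
    using unitary_mat_mult[OF W unitary_mat_block_diag_one[OF U]] by blast
qed

lemma eig_decomp_spec:
  assumes "A \<in> carrier_mat n n" "hermitian_mat A" "eig_decomp A = (U, d)"
  shows "unitary_mat n U" and "A = U * mat_diag n (\<lambda>i. complex_of_real (d i)) * cadj U"
proof -
  have "\<exists>p. (\<lambda>(U, d). unitary_mat (dim_row A) U
      \<and> A = U * mat_diag (dim_row A) (\<lambda>i. complex_of_real (d i)) * cadj U) p"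
    using hermitian_spectral[OF assms(1,2)] assms(1) by auto
  from someI_ex[OF this] assms(1,3)
  show "unitary_mat n U" and "A = U * mat_diag n (\<lambda>i. complex_of_real (d i)) * cadj U"
    unfolding eig_decomp_def by auto
qed

lemma spectral_decomp_eigenvector:
  assumes U: "unitary_mat n U" and A: "A = U * mat_diag n (\<lambda>i. complex_of_real (d i)) * cadj U"
    and i: "i < n"
  shows "A *\<^sub>v col U i = complex_of_real (d i) \<cdot>\<^sub>v col U i"
proof -
  note Um = unitary_matD[OF U]
  have "A * U = U * mat_diag n (\<lambda>i. complex_of_real (d i))"
    by (rule unitary_conj_diag(2)[OF U _ A]) simp
  moreover have "A \<in> carrier_mat n n"
    unfolding A by (intro mult_carrier_mat[of _ n n] mat_diag_dim Um(1) Um(2))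
  ultimately have "A *\<^sub>v col U i = col (U * mat_diag n (\<lambda>i. complex_of_real (d i))) i"
    using Um(1) i col_mult2[of A n n U n i] by simp
  also have "\<dots> = complex_of_real (d i) \<cdot>\<^sub>v col U i"
    using Um(1) i by (auto simp: mat_diag_mult_right intro!: eq_vecI)
  finally show ?thesis .
qed

lemma eig_decomp_pos:
  assumes A: "A \<in> carrier_mat n n" and pd: "pd_mat A" and ed: "eig_decomp A = (U, d)" and i: "i < n"
  shows "0 < d i"
proof -
  have "hermitian_mat A"
    using pd unfolding pd_mat_def by blast
  note U = eig_decomp_spec[OF A this ed]
  define u where "u = col U i"
  have u: "u \<in> carrier_vec n"
    by (rule carrier_vecI) (use unitary_matD(1)[OF U(1)] in \<open>simp add: u_def\<close>)
  have norm: "(\<Sum>k<n. cnj (u $ k) * u $ k) = 1"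
    using unitary_col_norm[OF U(1) i] unitary_matD(1)[OF U(1)] i by (simp add: u_def)
  have "qform A u = (\<Sum>k<n. cnj (u $ k) * (complex_of_real (d i) * u $ k))"
    unfolding qform_def using A u spectral_decomp_eigenvector[OF U i] unitary_matD(1)[OF U(1)]
    by (intro sum.cong) (auto simp: u_def)
  also have "\<dots> = complex_of_real (d i) * (\<Sum>k<n. cnj (u $ k) * u $ k)"
    by (simp add: sum_distrib_left mult.left_commute)
  also have "\<dots> = complex_of_real (d i)"
    by (simp add: norm)
  finally have qA: "qform A u = complex_of_real (d i)" .
  have "u \<noteq> 0\<^sub>v n"
  proof
    assume "u = 0\<^sub>v n"
    then have "(\<Sum>k<n. cnj (u $ k) * u $ k) = 0"
      by (intro sum.neutral) auto
    with norm show False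
      by simp
  qed
  then have "0 < Re (qform A u)"
    using pd u A unfolding pd_mat_def by auto
  then show ?thesis
    by (simp add: qA)
qed

section \<open>The f-information in an eigenbasis\<close>

lemma Re_cnj_mult_divide: "Re (cnj z * (z / complex_of_real r)) = (cmod z)\<^sup>2 / r"
proof -
  have "cnj z * (z / complex_of_real r) = (z * cnj z) / complex_of_real r"
    by simp
  also have "z * cnj z = complex_of_real ((cmod z)\<^sup>2)"
    by (metis complex_norm_square)
  finally have "cnj z * (z / complex_of_real r) = complex_of_real ((cmod z)\<^sup>2 / r)"
    by simp
  then show ?thesis
    by (metis Re_complex_of_real)
qed

lemma norm_sq_eigenbasis:
  assumes A: "\<rho> \<in> carrier_mat n n" "hermitian_mat \<rho>" and ed: "eig_decomp \<rho> = (U, d)"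
    and X: "X \<in> carrier_mat n n"
  shows "norm_sq g \<rho> X = (\<Sum>i<n. \<Sum>k<n. (cmod ((cadj U * X * U) $$ (k,i)))\<^sup>2 / mean_f g (d k) (d i))"
proof -
  note Um = unitary_matD[OF eig_decomp_spec(1)[OF A ed]]
  define Y where "Y = cadj U * X * U"
  define M where "M = mat n n (\<lambda>(i,j). Y $$ (i,j) / complex_of_real (mean_f g (d i) (d j)))"
  have Y: "Y \<in> carrier_mat n n" and M: "M \<in> carrier_mat n n" and X': "cadj X \<in> carrier_mat n n"
    using Um X cadj_carrier_mat[OF X] by (auto simp: Y_def M_def)
  have "mean_superop_inv g \<rho> X = U * M * cadj U"
    using A by (simp add: mean_superop_inv_def ed Let_def M_def Y_def)
  then have "mtrace (cadj X * mean_superop_inv g \<rho> X) = mtrace ((cadj X * U * M) * cadj U)"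
    using X' Um M by (simp add: assoc_mult_mat[of _ n n _ n _ n])
  also have "\<dots> = mtrace (cadj U * (cadj X * U * M))"
    by (rule mtrace_mult_comm) (use X' Um M in auto)
  also have "\<dots> = mtrace (cadj Y * M)"
    using cadj_congruence[OF X Um(1)] X' Um M by (simp add: Y_def assoc_mult_mat[of _ n n _ n _ n])
  also have "\<dots> = (\<Sum>i<n. \<Sum>k<n. cnj (Y $$ (k,i)) * M $$ (k,i))"
    using Y M by (simp add: mtrace_def scalar_prod_def atLeast0LessThan)
  finally have "norm_sq g \<rho> X = (\<Sum>i<n. \<Sum>k<n. Re (cnj (Y $$ (k,i)) * M $$ (k,i)))"
    by (simp add: norm_sq_def Re_sum)
  also have "\<dots> = (\<Sum>i<n. \<Sum>k<n. (cmod (Y $$ (k,i)))\<^sup>2 / mean_f g (d k) (d i))"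
  proof (intro sum.cong refl)
    fix i k assume "i \<in> {..<n}" "k \<in> {..<n}"
    then have "M $$ (k,i) = Y $$ (k,i) / complex_of_real (mean_f g (d k) (d i))"
      by (simp add: M_def)
    then show "Re (cnj (Y $$ (k,i)) * M $$ (k,i)) = (cmod (Y $$ (k,i)))\<^sup>2 / mean_f g (d k) (d i)"
      by (simp only: Re_cnj_mult_divide)
  qed
  finally show ?thesis
    by (simp add: Y_def)
qed

lemma commutator_eigenbasis:
  assumes U: "unitary_mat n U" and D: "D = mat_diag n (\<lambda>i. complex_of_real (d i))"
    and \<rho>: "\<rho> = U * D * cadj U" and A: "A \<in> carrier_mat n n" and k: "k < n" and i: "i < n"
  shows "(cadj U * (\<rho> * A - A * \<rho>) * U) $$ (k,i)
    = complex_of_real (d k - d i) * (cadj U * A * U) $$ (k,i)"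
proof -
  note Um = unitary_matD[OF U]
  have Dc: "D \<in> carrier_mat n n"
    by (simp add: D)
  have \<rho>c: "\<rho> \<in> carrier_mat n n"
    using Um Dc by (simp add: \<rho>)
  note conj = unitary_conj_diag[OF U Dc \<rho>]
  define B where "B = cadj U * A * U"
  have B: "B \<in> carrier_mat n n"
    using Um A by (simp add: B_def)
  have "cadj U * (\<rho> * A - A * \<rho>) * U = (cadj U * \<rho>) * A * U - cadj U * A * (\<rho> * U)"
    using Um \<rho>c A by (simp add: mult_minus_distrib_mat[of _ n n _ n] minus_mult_distrib_mat[of _ n n _ _ n]
        assoc_mult_mat[of _ n n _ n _ n])
  also have "\<dots> = D * B - B * D"
    unfolding conj using Um Dc A by (simp add: B_def assoc_mult_mat[of _ n n _ n _ n])
  finally show ?thesis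
    using k i B by (simp add: D mat_diag_mult_left mat_diag_mult_right algebra_simps flip: B_def)
qed

lemma f_info_eigenbasis:
  assumes A: "\<rho> \<in> carrier_mat n n" "hermitian_mat \<rho>" and ed: "eig_decomp \<rho> = (U, d)"
    and X: "A \<in> carrier_mat n n"
  shows "f_info g \<rho> A = fzero g / 2 *
    (\<Sum>i<n. \<Sum>k<n. (d k - d i)\<^sup>2 * (cmod ((cadj U * A * U) $$ (k,i)))\<^sup>2 / mean_f g (d k) (d i))"
proof -
  note U = eig_decomp_spec[OF A ed]
  note Um = unitary_matD[OF U(1)]
  have C: "\<rho> * A - A * \<rho> \<in> carrier_mat n n"
    using A X by auto
  have "cadj U * (\<i> \<cdot>\<^sub>m (\<rho> * A - A * \<rho>)) * U = \<i> \<cdot>\<^sub>m (cadj U * (\<rho> * A - A * \<rho>) * U)"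
    using Um C by (simp add: mult_smult_distrib[of _ n n _ n] mult_smult_assoc_mat[of _ n n _ n])
  then have "(cadj U * (\<i> \<cdot>\<^sub>m (\<rho> * A - A * \<rho>)) * U) $$ (k,i)
      = \<i> * (cadj U * (\<rho> * A - A * \<rho>) * U) $$ (k,i)" if "k < n" "i < n" for k i
    by (simp only:) (rule index_smult_mat(1), use that Um C in auto)
  then have "(cmod ((cadj U * (\<i> \<cdot>\<^sub>m (\<rho> * A - A * \<rho>)) * U) $$ (k,i)))\<^sup>2
      = (d k - d i)\<^sup>2 * (cmod ((cadj U * A * U) $$ (k,i)))\<^sup>2" if "k < n" "i < n" for k i
    using that commutator_eigenbasis[OF U(1) refl U(2) X that]
    by (simp add: norm_mult power_mult_distrib del: of_real_diff)
  then show ?thesis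
    unfolding f_info_def norm_sq_eigenbasis[OF A ed smult_carrier_mat[OF C]]
    by (simp add: sum_divide_distrib)
qed

lemma fzero_f_SLD: "fzero f_SLD = 1 / 2"
  unfolding fzero_def f_SLD_def[abs_def]
  by (rule tendsto_Lim) (auto intro!: tendsto_eq_intros)

lemma mean_f_SLD: "0 < x \<Longrightarrow> mean_f f_SLD x y = (x + y) / 2"
  by (simp add: mean_f_def f_SLD_def field_simps)

lemma Fop_pos: "Fop f \<Longrightarrow> 0 < t \<Longrightarrow> 0 < f t"
  by (simp add: Fop_def)

lemma Fop_operator_monotone: "Fop f \<Longrightarrow> operator_monotone f"
  by (simp add: Fop_def)

lemma mean_f_Fop_commute:
  assumes f: "Fop f" and x: "0 < x" and y: "0 < y"
  shows "mean_f f x y = mean_f f y x"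
proof -
  have "\<forall>t>0. t * f (1 / t) = f t"
    using f by (simp add: Fop_def)
  then have sym: "(y / x) * f (x / y) = f (y / x)"
    using x y by (metis divide_pos_pos inverse_divide inverse_eq_divide)
  show ?thesis
    using x by (simp add: mean_f_def flip: sym)
qed

section \<open>Comparison with the SLD information\<close>

lemma mult_le_linear_iff:
  fixes x y F c :: real
  assumes "0 < x"
  shows "x * F \<le> c * (x + y) \<longleftrightarrow> F \<le> c * (1 + y / x)"
proof -
  have "c * (x + y) = x * (c * (1 + y / x))"
    using assms by (simp add: field_simps)
  then show ?thesis
    by (simp only: mult_le_cancel_left_pos[OF assms])
qed

lemma one_div_le_div_iff:
  fixes b c d :: real
  assumes "0 < b" "0 < d"
  shows "1 / b \<le> c / d \<longleftrightarrow> d \<le> c * b"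
  using assms by (simp add: divide_le_eq le_divide_eq mult.commute)

(* One term of the eigenbasis expansions of SLD_info and of k * f_info, with c = k * fzero f. *)
lemma SLD_term_le_iff:
  fixes w x y F c :: real
  assumes w: "0 < w" and x: "0 < x" and y: "0 < y" and F: "0 < F"
  shows "fzero f_SLD / 2 * (w / ((x + y) / 2)) \<le> c / 2 * (w / (x * F)) \<longleftrightarrow> F \<le> c * (1 + y / x)"
proof -
  have w2: "0 < w / 2"
    using w by simp
  have "fzero f_SLD / 2 * (w / ((x + y) / 2)) = w / 2 * (1 / (x + y))"
    and "c / 2 * (w / (x * F)) = w / 2 * (c / (x * F))"
    using x y by (simp_all add: fzero_f_SLD)
  then have "fzero f_SLD / 2 * (w / ((x + y) / 2)) \<le> c / 2 * (w / (x * F))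
      \<longleftrightarrow> 1 / (x + y) \<le> c / (x * F)"
    by (simp only: mult_le_cancel_left_pos[OF w2])
  also have "\<dots> \<longleftrightarrow> x * F \<le> c * (x + y)"
    by (rule one_div_le_div_iff) (use x y F in simp_all)
  also have "\<dots> \<longleftrightarrow> F \<le> c * (1 + y / x)"
    by (rule mult_le_linear_iff[OF x])
  finally show ?thesis .
qed

lemma SLD_info_le_of_bound:
  assumes f: "Fop f" and bound: "\<forall>t>0. t \<noteq> 1 \<longrightarrow> f t \<le> k * fzero f * (1 + t)"
    and \<rho>: "faithful_density n \<rho>" and A: "A \<in> carrier_mat n n"
  shows "SLD_info \<rho> A \<le> k * f_info f \<rho> A"
proof -
  have \<rho>c: "\<rho> \<in> carrier_mat n n" and pd: "pd_mat \<rho>"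
    using \<rho> by (simp_all add: faithful_density_def)
  then have herm: "hermitian_mat \<rho>"
    by (simp add: pd_mat_def)
  obtain U d where ed: "eig_decomp \<rho> = (U, d)"
    by (cases "eig_decomp \<rho>")
  define w where "w i j = (d j - d i)\<^sup>2 * (cmod ((cadj U * A * U) $$ (j,i)))\<^sup>2" for i j
  have "fzero f_SLD / 2 * (w i j / mean_f f_SLD (d j) (d i)) \<le> k * fzero f / 2 * (w i j / mean_f f (d j) (d i))"
    if "i < n" "j < n" for i j
  proof (cases "w i j = 0")
    case False
    have x: "0 < d j" and y: "0 < d i"
      using eig_decomp_pos[OF \<rho>c pd ed] that by auto
    have w: "0 < w i j"
      using False by (simp add: w_def)
    have "d i / d j \<noteq> 1"
      using False x by (auto simp: w_def)
    then have "f (d i / d j) \<le> k * fzero f * (1 + d i / d j)"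
      using bound x y by simp
    then show ?thesis
      unfolding mean_f_SLD[OF x] mean_f_def[of f]
      using SLD_term_le_iff[OF w x y Fop_pos[OF f], where c = "k * fzero f"] x y by simp
  qed simp
  then have "(\<Sum>i<n. \<Sum>j<n. fzero f_SLD / 2 * (w i j / mean_f f_SLD (d j) (d i)))
      \<le> (\<Sum>i<n. \<Sum>j<n. k * fzero f / 2 * (w i j / mean_f f (d j) (d i)))"
    by (intro sum_mono) auto
  then show ?thesis
    unfolding SLD_info_def f_info_eigenbasis[OF \<rho>c herm ed A]
    by (simp add: w_def sum_distrib_left mult.assoc)
qed

definition diag2 :: "real \<Rightarrow> real \<Rightarrow> complex mat" where
  "diag2 x y = mat_diag 2 (\<lambda>i. complex_of_real (if i = 0 then x else y))"

definition pauli_x :: "complex mat" where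
  "pauli_x = mat 2 2 (\<lambda>(i,j). if i = j then 0 else 1)"

lemma sum_lessThan_2: "(\<Sum>i<(2::nat). g i) = g 0 + g 1"
  by (simp add: numeral_2_eq_2)

lemma diag2_carrier: "diag2 x y \<in> carrier_mat 2 2"
  by (simp add: diag2_def)

lemma dim_diag2 [simp]: "dim_row (diag2 x y) = 2" "dim_col (diag2 x y) = 2"
  by (simp_all add: diag2_def mat_diag_def)

lemma hermitian_diag2: "hermitian_mat (diag2 x y)"
  by (auto simp: hermitian_mat_def diag2_def mat_diag_def intro!: eq_matI)

lemma pauli_x_carrier: "pauli_x \<in> carrier_mat 2 2"
  by (simp add: pauli_x_def)

lemma hermitian_pauli_x: "hermitian_mat pauli_x"
  by (auto simp: hermitian_mat_def pauli_x_def intro!: eq_matI)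

lemma faithful_density_diag2:
  assumes x: "0 < x" and y: "0 < y" and xy: "x + y = 1"
  shows "faithful_density 2 (diag2 x y)"
  unfolding faithful_density_def pd_mat_def
proof (intro conjI ballI impI diag2_carrier hermitian_diag2)
  show "mtrace (diag2 x y) = 1"
    using xy by (simp add: mtrace_def diag2_def mat_diag_def sum_lessThan_2 flip: of_real_add)
  fix v :: "complex vec"
  assume "v \<in> carrier_vec (dim_row (diag2 x y))" and v0: "v \<noteq> 0\<^sub>v (dim_row (diag2 x y))"
  then have v: "v \<in> carrier_vec 2" and v0: "v \<noteq> 0\<^sub>v 2"
    by simp_all
  have "qform (diag2 x y) v = complex_of_real x * (v $ 0 * cnj (v $ 0)) + complex_of_real y * (v $ 1 * cnj (v $ 1))"
    using v by (simp add: qform_def diag2_def mat_diag_def scalar_prod_def atLeast0LessThan sum_lessThan_2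
        algebra_simps)
  also have "\<dots> = complex_of_real (x * (cmod (v $ 0))\<^sup>2 + y * (cmod (v $ 1))\<^sup>2)"
    by (simp flip: complex_norm_square)
  finally have q: "Re (qform (diag2 x y) v) = x * (cmod (v $ 0))\<^sup>2 + y * (cmod (v $ 1))\<^sup>2"
    by simp
  have "v $ 0 \<noteq> 0 \<or> v $ 1 \<noteq> 0"
  proof (rule ccontr)
    assume "\<not> (v $ 0 \<noteq> 0 \<or> v $ 1 \<noteq> 0)"
    then have "v = 0\<^sub>v 2"
      using v by (intro eq_vecI) (auto simp: less_2_cases_iff)
    with v0 show False ..
  qed
  then show "0 < Re (qform (diag2 x y) v)"
    unfolding q using x y by (auto intro: add_pos_nonneg add_nonneg_pos)
qed

lemma f_info_dim2:
  assumes "\<rho> \<in> carrier_mat 2 2" "hermitian_mat \<rho>" "eig_decomp \<rho> = (U, d)" "A \<in> carrier_mat 2 2"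
    and sym: "mean_f g (d 1) (d 0) = mean_f g (d 0) (d 1)"
  shows "f_info g \<rho> A = fzero g / 2 * ((d 0 - d 1)\<^sup>2
    * ((cmod ((cadj U * A * U) $$ (1,0)))\<^sup>2 + (cmod ((cadj U * A * U) $$ (0,1)))\<^sup>2) / mean_f g (d 0) (d 1))"
  unfolding f_info_eigenbasis[OF assms(1-4)] sum_lessThan_2 sym power2_commute[of "d 1" "d 0"]
  by (simp add: add_divide_distrib distrib_left)

lemma eig_decomp_diag2:
  assumes xy: "x \<noteq> y" and ed: "eig_decomp (diag2 x y) = (U, d)"
  shows "d 0 = x \<and> d 1 = y \<or> d 0 = y \<and> d 1 = x"
proof -
  define D where "D = mat_diag 2 (\<lambda>i. complex_of_real (d i))"
  note U = eig_decomp_spec[OF diag2_carrier hermitian_diag2 ed, folded D_def]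
  note Um = unitary_matD[OF U(1)]
  have D: "D \<in> carrier_mat 2 2"
    by (simp add: D_def)
  have "diag2 x y * U = U * D"
    using unitary_conj_diag(2)[OF U(1) D U(2)] .
  have entry: "U $$ (j,c) = 0 \<or> d c = (if j = 0 then x else y)" if "j < 2" "c < 2" for j c
  proof -
    have "(diag2 x y * U) $$ (j,c) = complex_of_real (if j = 0 then x else y) * U $$ (j,c)"
      using that Um(1) by (simp add: diag2_def mat_diag_mult_left)
    moreover have "(U * D) $$ (j,c) = U $$ (j,c) * complex_of_real (d c)"
      using that Um(1) by (simp add: D_def mat_diag_mult_right)
    ultimately show ?thesis
      using \<open>diag2 x y * U = U * D\<close> by (auto simp: mult.commute)
  qed
  have dc: "d c = x \<or> d c = y" if c: "c < 2" for c
  proof -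
    have "U $$ (0,c) \<noteq> 0 \<or> U $$ (1,c) \<noteq> 0"
      using unitary_col_norm[OF U(1) c]
      by (auto simp: sum_lessThan_2)
    then show ?thesis
      using entry[of 0 c] entry[of 1 c] c by auto
  qed
  have "d 0 + d 1 = x + y"
  proof -
    have "mtrace (diag2 x y) = mtrace D"
      unfolding U(2) by (rule mtrace_unitary_conj[OF U(1) D])
    then show ?thesis
      by (simp add: mtrace_def diag2_def D_def mat_diag_def sum_lessThan_2 flip: of_real_add)
  qed
  moreover have "d 0 = x \<or> d 0 = y" and "d 1 = x \<or> d 1 = y"
    using dc[of 0] dc[of 1] by simp_all
  ultimately show ?thesis
    using xy by auto
qed

lemma pauli_x_offdiag_pos:
  assumes xy: "x \<noteq> y" and ed: "eig_decomp (diag2 x y) = (U, d)"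
  shows "0 < (cmod ((cadj U * pauli_x * U) $$ (1,0)))\<^sup>2 + (cmod ((cadj U * pauli_x * U) $$ (0,1)))\<^sup>2"
proof (rule ccontr)
  assume "\<not> ?thesis"
  moreover have "0 \<le> (cmod ((cadj U * pauli_x * U) $$ (1,0)))\<^sup>2 + (cmod ((cadj U * pauli_x * U) $$ (0,1)))\<^sup>2"
    by simp
  ultimately have "(cmod ((cadj U * pauli_x * U) $$ (1,0)))\<^sup>2 + (cmod ((cadj U * pauli_x * U) $$ (0,1)))\<^sup>2 = 0"
    by linarith
  then have B0: "(cadj U * pauli_x * U) $$ (1,0) = 0" "(cadj U * pauli_x * U) $$ (0,1) = 0"
    by (simp_all only: sum_power2_eq_zero_iff norm_eq_zero)
  note U = eig_decomp_spec[OF diag2_carrier hermitian_diag2 ed]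
  note Um = unitary_matD[OF U(1)]
  define C where "C = diag2 x y * pauli_x - pauli_x * diag2 x y"
  have C: "C \<in> carrier_mat 2 2"
    unfolding C_def by (intro minus_carrier_mat mult_carrier_mat[of _ 2 2] diag2_carrier pauli_x_carrier)
  have "cadj U * C * U = 0\<^sub>m 2 2"
  proof (rule eq_matI)
    fix k i assume "k < dim_row (0\<^sub>m 2 2 :: complex mat)" "i < dim_col (0\<^sub>m 2 2 :: complex mat)"
    then have k: "k < 2" and i: "i < 2"
      by simp_all
    show "(cadj U * C * U) $$ (k,i) = 0\<^sub>m 2 2 $$ (k,i)"
      using commutator_eigenbasis[OF U(1) refl U(2) pauli_x_carrier k i] B0 k i
      by (auto simp: C_def less_2_cases_iff)
  qed (use Um C in auto)
  moreover have "C = U * (cadj U * C * U) * cadj U"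
    using Um C unitary_mat_cancel[OF U(1) C] by (simp add: assoc_mult_mat[of _ 2 2 _ 2 _ 2])
  ultimately have "C $$ (0,1) = 0"
    using Um by simp
  moreover have "C $$ (0,1) = complex_of_real (x - y)"
    using mat_diag_mult_left[OF pauli_x_carrier] mat_diag_mult_right[OF pauli_x_carrier]
    by (simp add: C_def diag2_def pauli_x_def)
  ultimately show False
    using xy by simp
qed

(* Test (i) on rho = diag(x, y) with y / x = t and A = sigma_x: both sides reduce to one term. *)
lemma bound_of_SLD_info_le:
  assumes f: "Fop f"
    and H: "\<forall>n \<rho> A. faithful_density n \<rho> \<longrightarrow> A \<in> carrier_mat n n \<longrightarrow> hermitian_mat A \<longrightarrow>
             SLD_info \<rho> A \<le> k * f_info f \<rho> A"
    and t: "0 < t" "t \<noteq> 1"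
  shows "f t \<le> k * fzero f * (1 + t)"
proof -
  define x where "x = 1 / (1 + t)"
  define y where "y = t / (1 + t)"
  have x: "0 < x" and y: "0 < y" and "x + y = 1" and yx: "y / x = t"
    using t by (simp_all add: x_def y_def field_simps)
  then have "x \<noteq> y"
    using t by auto
  obtain U d where ed: "eig_decomp (diag2 x y) = (U, d)"
    by (cases "eig_decomp (diag2 x y)")
  have d: "d 0 = x \<and> d 1 = y \<or> d 0 = y \<and> d 1 = x"
    by (rule eig_decomp_diag2[OF \<open>x \<noteq> y\<close> ed])
  define w where "w = (d 0 - d 1)\<^sup>2
    * ((cmod ((cadj U * pauli_x * U) $$ (1,0)))\<^sup>2 + (cmod ((cadj U * pauli_x * U) $$ (0,1)))\<^sup>2)"
  have "0 < w"
    using pauli_x_offdiag_pos[OF \<open>x \<noteq> y\<close> ed] d \<open>x \<noteq> y\<close> by (auto simp: w_def)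
  have SLD_mean: "mean_f f_SLD (d 0) (d 1) = (x + y) / 2"
    and SLD_sym: "mean_f f_SLD (d 1) (d 0) = mean_f f_SLD (d 0) (d 1)"
    using d x y by (auto simp: mean_f_SLD)
  have f_mean: "mean_f f (d 0) (d 1) = x * f (y / x)"
    and f_sym: "mean_f f (d 1) (d 0) = mean_f f (d 0) (d 1)"
    using d x y mean_f_Fop_commute[OF f x y] by (auto simp: mean_f_def)
  note info = f_info_dim2[OF diag2_carrier hermitian_diag2 ed pauli_x_carrier]
  have "SLD_info (diag2 x y) pauli_x \<le> k * f_info f (diag2 x y) pauli_x"
    using H faithful_density_diag2[OF x y \<open>x + y = 1\<close>] pauli_x_carrier hermitian_pauli_x by blast
  then have "fzero f_SLD / 2 * (w / ((x + y) / 2)) \<le> k * fzero f / 2 * (w / (x * f (y / x)))"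
    unfolding SLD_info_def info[OF SLD_sym] info[OF f_sym] SLD_mean f_mean w_def by simp
  then show ?thesis
    using SLD_term_le_iff[OF \<open>0 < w\<close> x y Fop_pos[OF f divide_pos_pos[OF y x]], where c = "k * fzero f"] yx
    by simp
qed

section \<open>The bound on the mean of ftilde\<close>

lemma mean_ftilde_le_iff:
  fixes f :: "real \<Rightarrow> real"
  assumes x: "0 < x" and y: "0 < y" and F: "0 < f (y / x)" and k: "0 < k"
  shows "mean_f (ftilde f) x y \<le> (1 - 1 / k) * ((x + y) / 2) + (1 / k) * (2 * x * y / (x + y))
    \<longleftrightarrow> x = y \<or> f (y / x) \<le> k * fzero f * (1 + y / x)"
proof -
  define F where "F = f (y / x)"
  define a where "a = (x - y)\<^sup>2 / 2"
  have lhs: "mean_f (ftilde f) x y = (x + y) / 2 - a * (fzero f / (x * F))"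
    using x F by (simp add: mean_f_def ftilde_def F_def a_def field_simps power2_eq_square)
  have "(1 - 1 / k) * ((x + y) / 2) + (1 / k) * (2 * x * y / (x + y))
      = (x + y) / 2 - (1 / k) * ((x + y) / 2 - 2 * x * y / (x + y))"
    by (simp only: left_diff_distrib right_diff_distrib mult_1)
  also have "(x + y) / 2 - 2 * x * y / (x + y) = (x - y)\<^sup>2 / (2 * (x + y))"
    using x y by (simp add: field_simps power2_eq_square)
  also have "(1 / k) * ((x - y)\<^sup>2 / (2 * (x + y))) = a * (1 / (k * (x + y)))"
    by (simp add: a_def)
  finally have rhs: "(1 - 1 / k) * ((x + y) / 2) + (1 / k) * (2 * x * y / (x + y))
      = (x + y) / 2 - a * (1 / (k * (x + y)))" .
  have "a * (1 / (k * (x + y))) \<le> a * (fzero f / (x * F)) \<longleftrightarrow> x = y \<or> F \<le> k * fzero f * (1 + y / x)"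
  proof (cases "x = y")
    case False
    then have pos: "0 < a"
      by (simp add: a_def)
    have "a * (1 / (k * (x + y))) \<le> a * (fzero f / (x * F)) \<longleftrightarrow> 1 / (k * (x + y)) \<le> fzero f / (x * F)"
      by (simp only: mult_le_cancel_left_pos[OF pos])
    also have "\<dots> \<longleftrightarrow> x * F \<le> fzero f * (k * (x + y))"
      by (rule one_div_le_div_iff) (use x y k F in \<open>simp_all add: F_def\<close>)
    also have "\<dots> \<longleftrightarrow> x * F \<le> k * fzero f * (x + y)"
      by (simp only: mult.assoc mult.commute mult.left_commute)
    also have "\<dots> \<longleftrightarrow> F \<le> k * fzero f * (1 + y / x)"
      by (rule mult_le_linear_iff[OF x])
    finally show ?thesis
      using False by simp
  qed (simp add: a_def)
  moreover have "p - q \<le> p - r \<longleftrightarrow> r \<le> q" for p q r :: real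
    by simp
  ultimately show ?thesis
    unfolding lhs rhs F_def[symmetric] by blast
qed

lemma mean_ftilde_bound_iff:
  assumes f: "Fop f" and k: "0 < k"
  shows "(\<forall>x>0. \<forall>y>0. mean_f (ftilde f) x y \<le> (1 - 1 / k) * ((x + y) / 2) + (1 / k) * (2 * x * y / (x + y)))
    \<longleftrightarrow> (\<forall>t>0. t \<noteq> 1 \<longrightarrow> f t \<le> k * fzero f * (1 + t))"
proof (intro iffI allI impI)
  fix t :: real
  assume H: "\<forall>x>0. \<forall>y>0. mean_f (ftilde f) x y \<le> (1 - 1 / k) * ((x + y) / 2) + (1 / k) * (2 * x * y / (x + y))"
    and t: "0 < t" "t \<noteq> 1"
  then show "f t \<le> k * fzero f * (1 + t)"
    using H[rule_format, of 1 t] mean_ftilde_le_iff[of 1 t f k] k Fop_pos[OF f t(1)] by simp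
next
  fix x y :: real
  assume H: "\<forall>t>0. t \<noteq> 1 \<longrightarrow> f t \<le> k * fzero f * (1 + t)" and x: "0 < x" and y: "0 < y"
  have "x = y \<or> f (y / x) \<le> k * fzero f * (1 + y / x)"
  proof (cases "x = y")
    case False
    then have "y / x \<noteq> 1"
      using x by (simp add: divide_eq_1_iff)
    then show ?thesis
      using H x y by simp
  qed simp
  then show "mean_f (ftilde f) x y \<le> (1 - 1 / k) * ((x + y) / 2) + (1 / k) * (2 * x * y / (x + y))"
    using mean_ftilde_le_iff[OF x y Fop_pos[OF f] k] x y by simp
qed

section \<open>Operator monotone functions are monotone\<close>

definition scalar_mat :: "real \<Rightarrow> complex mat" where
  "scalar_mat a = mat 1 1 (\<lambda>_. complex_of_real a)"

lemma scalar_mat_carrier: "scalar_mat a \<in> carrier_mat 1 1"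
  by (simp add: scalar_mat_def)

lemma dim_scalar_mat [simp]: "dim_row (scalar_mat a) = 1" "dim_col (scalar_mat a) = 1"
  by (simp_all add: scalar_mat_def)

lemma scalar_mat_diff: "scalar_mat b - scalar_mat a = scalar_mat (b - a)"
  by (auto simp: scalar_mat_def intro!: eq_matI)

lemma qform_scalar_mat:
  assumes "v \<in> carrier_vec 1"
  shows "qform (scalar_mat a) v = complex_of_real (a * (cmod (v $ 0))\<^sup>2)"
proof -
  have "qform (scalar_mat a) v = complex_of_real a * (v $ 0 * cnj (v $ 0))"
    using assms by (simp add: scalar_mat_def qform_def scalar_prod_def)
  also have "v $ 0 * cnj (v $ 0) = complex_of_real ((cmod (v $ 0))\<^sup>2)"
    by (metis complex_norm_square)
  finally show ?thesis
    by simp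
qed

lemma hermitian_scalar_mat: "hermitian_mat (scalar_mat a)"
  by (auto simp: hermitian_mat_def scalar_mat_def intro!: eq_matI)

lemma psd_scalar_mat_iff: "psd_mat (scalar_mat a) \<longleftrightarrow> 0 \<le> a"
proof
  assume "psd_mat (scalar_mat a)"
  moreover have "vec 1 (\<lambda>_. 1) \<in> carrier_vec (dim_row (scalar_mat a))"
    by simp
  ultimately have "0 \<le> Re (qform (scalar_mat a) (vec 1 (\<lambda>_. 1)))"
    by (simp add: psd_mat_def)
  then show "0 \<le> a"
    by (simp add: qform_scalar_mat)
next
  assume "0 \<le> a"
  then show "psd_mat (scalar_mat a)"
    by (simp add: psd_mat_def hermitian_scalar_mat qform_scalar_mat)
qed

lemma pd_scalar_mat:
  assumes "0 < a"
  shows "pd_mat (scalar_mat a)"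
  unfolding pd_mat_def
proof (intro conjI ballI impI hermitian_scalar_mat)
  fix v :: "complex vec"
  assume "v \<in> carrier_vec (dim_row (scalar_mat a))" and v0: "v \<noteq> 0\<^sub>v (dim_row (scalar_mat a))"
  then have v: "v \<in> carrier_vec 1" and v0: "v \<noteq> 0\<^sub>v 1"
    by auto
  have "v $ 0 \<noteq> 0"
  proof
    assume "v $ 0 = 0"
    then have "v = 0\<^sub>v 1"
      using v by (intro eq_vecI) auto
    with v0 show False ..
  qed
  then show "0 < Re (qform (scalar_mat a) v)"
    using assms v by (simp add: qform_scalar_mat)
qed

lemma mat_fun_scalar_mat: "mat_fun f (scalar_mat a) = scalar_mat (f a)"
proof -
  obtain U d where ed: "eig_decomp (scalar_mat a) = (U, d)"
    by (cases "eig_decomp (scalar_mat a)")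
  note U = eig_decomp_spec[OF scalar_mat_carrier hermitian_scalar_mat ed]
  note Um = unitary_matD[OF U(1)]
  have entry: "(U * mat_diag 1 g * cadj U) $$ (0,0) = g 0" for g
  proof -
    have "(U * mat_diag 1 g * cadj U) $$ (0,0) = g 0 * (U $$ (0,0) * cnj (U $$ (0,0)))"
      using index_mult_diag_cadj[OF Um(1), of 0 0 g] by simp
    also have "U $$ (0,0) * cnj (U $$ (0,0)) = (U * cadj U) $$ (0,0)"
      using Um(1) by (simp add: scalar_prod_def)
    finally show ?thesis
      using Um(4) by simp
  qed
  have "d 0 = a"
    using arg_cong[OF U(2), of "\<lambda>M. M $$ (0,0)"] entry by (simp add: scalar_mat_def)
  moreover have "mat_fun f (scalar_mat a) = U * mat_diag 1 (\<lambda>i. complex_of_real (f (d i))) * cadj U"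
    by (simp add: mat_fun_def ed)
  ultimately show ?thesis
    using entry Um(1) by (intro eq_matI) (auto simp: scalar_mat_def)
qed

lemma operator_monotone_mono:
  assumes f: "operator_monotone f" and a: "0 < a" and ab: "a \<le> b"
  shows "f a \<le> f b"
proof -
  have "psd_mat (mat_fun f (scalar_mat b) - mat_fun f (scalar_mat a))"
    using f[unfolded operator_monotone_def, rule_format, where n = 1 and A = "scalar_mat a" and B = "scalar_mat b"]
      a ab scalar_mat_carrier
    by (simp add: pd_scalar_mat scalar_mat_diff psd_scalar_mat_iff)
  then show ?thesis
    by (simp add: mat_fun_scalar_mat scalar_mat_diff psd_scalar_mat_iff)
qed

lemma linear_bound_at_one:
  fixes f :: "real \<Rightarrow> real"
  assumes mono: "\<And>s. 1 < s \<Longrightarrow> f 1 \<le> f s" and bound: "\<And>s. 1 < s \<Longrightarrow> f s \<le> c * (1 + s)"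
  shows "f 1 \<le> c * (1 + 1)"
proof (rule tendsto_lowerbound)
  show "((\<lambda>s. c * (1 + s)) \<longlongrightarrow> c * (1 + 1)) (at_right 1)"
    by (intro tendsto_intros)
  show "\<forall>\<^sub>F s in at_right 1. f 1 \<le> c * (1 + s)"
    using eventually_at_right_less by (rule eventually_mono) (use mono bound in \<open>blast intro: order_trans\<close>)
qed simp

lemma Fop_linear_bound_iff:
  assumes f: "Fop f"
  shows "(\<forall>t>0. f t \<le> c * (1 + t)) \<longleftrightarrow> (\<forall>t>0. t \<noteq> 1 \<longrightarrow> f t \<le> c * (1 + t))"
proof (intro iffI allI impI)
  fix t :: real
  assume H: "\<forall>t>0. t \<noteq> 1 \<longrightarrow> f t \<le> c * (1 + t)" and t: "0 < t"
  have "f 1 \<le> c * (1 + 1)"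
  proof (rule linear_bound_at_one)
    show "f 1 \<le> f s" if "1 < s" for s
      using that by (intro operator_monotone_mono[OF Fop_operator_monotone[OF f]]) auto
    show "f s \<le> c * (1 + s)" if "1 < s" for s
      using H that by simp
  qed
  then show "f t \<le> c * (1 + t)"
    using H t by (cases "t = 1") auto
qed simp

theorem mainTheorem6:
  fixes f :: "real \<Rightarrow> real" and k :: real
  assumes "Fop_r f" and "k \<ge> 1"
  shows "((\<forall>n \<rho> A. faithful_density n \<rho> \<longrightarrow> A \<in> carrier_mat n n \<longrightarrow> hermitian_mat A \<longrightarrow>
             SLD_info \<rho> A \<le> k * f_info f \<rho> A)
          \<longleftrightarrow> (\<forall>x>0. \<forall>y>0. mean_f (ftilde f) x y \<le>
                  (1 - 1 / k) * ((x + y) / 2) + (1 / k) * (2 * x * y / (x + y))))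
       \<and> ((\<forall>x>0. \<forall>y>0. mean_f (ftilde f) x y \<le>
                  (1 - 1 / k) * ((x + y) / 2) + (1 / k) * (2 * x * y / (x + y)))
          \<longleftrightarrow> (\<forall>x>0. f x \<le> 2 * k * fzero f * ((1 + x) / 2)))"
proof -
  have f: "Fop f"
    using assms(1) by (simp add: Fop_r_def)
  have k: "0 < k"
    using assms(2) by simp
  have i: "(\<forall>n \<rho> A. faithful_density n \<rho> \<longrightarrow> A \<in> carrier_mat n n \<longrightarrow> hermitian_mat A \<longrightarrow>
             SLD_info \<rho> A \<le> k * f_info f \<rho> A)
      \<longleftrightarrow> (\<forall>t>0. t \<noteq> 1 \<longrightarrow> f t \<le> k * fzero f * (1 + t))"
    using SLD_info_le_of_bound[OF f] bound_of_SLD_info_le[OF f] by blast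
  have "2 * k * fzero f * ((1 + x) / 2) = k * fzero f * (1 + x)" for x
    by simp
  then have iii: "(\<forall>x>0. f x \<le> 2 * k * fzero f * ((1 + x) / 2))
      \<longleftrightarrow> (\<forall>t>0. t \<noteq> 1 \<longrightarrow> f t \<le> k * fzero f * (1 + t))"
    using Fop_linear_bound_iff[OF f] by presburger
  show ?thesis
    using i mean_ftilde_bound_iff[OF f k] iii by blast
qed

end
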